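(* Fix $0<B<1$ and $H>0$, let $$x(s)=\frac1H\sqrt{1+B^2+2B\sin\!\big(Hs+\tfrac{3\pi}{2}\big)},\qquad z(s)=\int_{3\pi/(2H)}^{\,s+3\pi/(2H)}\frac{1+B\sin(Ht)}{\sqrt{1+B^2+2B\sin(Ht)}}\,dt ,$$ $\beta(s)=(x(s),0,z(s))$, and let $\Sigma$ be the (complete) unduloid obtained by rotating $\beta$ about the $z$-axis, with unit normal $N=(-z'\cos\theta,-z'\sin\theta,x')$ at $(x(s)\cos\theta,x(s)\sin\theta,z(s))$ and constant mean curvature $H$ with respect to $N$. For $n\in\mathbb N$ let $$t_n=-\frac1H\sin^{-1}(-B)+\frac{(4n-1)\pi}{2H}\quad(\text{so }\sin(Ht_n+\tfrac{3\pi}{2})=-B),$$ and $p_n=\beta(t_n)$. Then there is $n_0\in\mathbb N$ such that for all $n\ge n_0$, $$|\Phi|^2\langle\vec x,N\rangle^2>\tfrac12\big(2+H\langle\vec x,N\rangle\big)^2\quad\text{at }p_n.$$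
   Context: Conventions: $\sin^{-1}:[-1,1]\to[-\pi/2,\pi/2]$; shape operator $A$ w.r.t. $N$ defined by $\langle A(Y),Z\rangle=\langle\bar\nabla_YZ,N\rangle$; mean curvature $H=\operatorname{tr}A$ (unnormalized); $\Phi=\Pi-\frac H2g_\Sigma$, so $|\Phi|^2=|A|^2-H^2/2$; $\vec x$ the position vector. *)

theory Defs
  imports "HOL-Analysis.Analysis"
begin

definition oint :: "real \<Rightarrow> real \<Rightarrow> (real \<Rightarrow> real) \<Rightarrow> real" where
  "oint a b f = (if a \<le> b then integral {a..b} f else - integral {b..a} f)"

definition undx :: "real \<Rightarrow> real \<Rightarrow> real \<Rightarrow> real" where
  "undx B H s = (1 / H) * sqrt (1 + B^2 + 2 * B * sin (H * s + 3 * pi / 2))"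

definition undz :: "real \<Rightarrow> real \<Rightarrow> real \<Rightarrow> real" where
  "undz B H s = oint (3 * pi / (2 * H)) (s + 3 * pi / (2 * H))
      (\<lambda>t. (1 + B * sin (H * t)) / sqrt (1 + B^2 + 2 * B * sin (H * t)))"

definition revX :: "(real \<Rightarrow> real) \<Rightarrow> (real \<Rightarrow> real) \<Rightarrow> real \<Rightarrow> real \<Rightarrow> real \<times> real \<times> real" where
  "revX x z s \<theta> = (x s * cos \<theta>, x s * sin \<theta>, z s)"

definition revN :: "(real \<Rightarrow> real) \<Rightarrow> (real \<Rightarrow> real) \<Rightarrow> real \<Rightarrow> real \<Rightarrow> real \<times> real \<times> real" where
  "revN x z s \<theta> = (- deriv z s * cos \<theta>, - deriv z s * sin \<theta>, deriv x s)"

(* Coordinate partial derivatives of a parametrization F(u1,u2); index 1 = s, 2 = \<theta> *)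
definition pd :: "(real \<Rightarrow> real \<Rightarrow> real \<times> real \<times> real) \<Rightarrow> nat \<Rightarrow> real \<Rightarrow> real \<Rightarrow> real \<times> real \<times> real" where
  "pd F i u v = (if i = 1 then vector_derivative (\<lambda>t. F t v) (at u)
                 else vector_derivative (\<lambda>t. F u t) (at v))"

definition fff :: "(real \<Rightarrow> real \<Rightarrow> real \<times> real \<times> real) \<Rightarrow> nat \<Rightarrow> nat \<Rightarrow> real \<Rightarrow> real \<Rightarrow> real" where
  "fff F i j u v = pd F i u v \<bullet> pd F j u v"

definition sff :: "(real \<Rightarrow> real \<Rightarrow> real \<times> real \<times> real) \<Rightarrow> (real \<Rightarrow> real \<Rightarrow> real \<times> real \<times> real)
     \<Rightarrow> nat \<Rightarrow> nat \<Rightarrow> real \<Rightarrow> real \<Rightarrow> real" where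
  "sff F N i j u v = pd (pd F j) i u v \<bullet> N u v"

definition ginv :: "(real \<Rightarrow> real \<Rightarrow> real \<times> real \<times> real) \<Rightarrow> nat \<Rightarrow> nat \<Rightarrow> real \<Rightarrow> real \<Rightarrow> real" where
  "ginv F i j u v =
     (let D = fff F 1 1 u v * fff F 2 2 u v - fff F 1 2 u v * fff F 2 1 u v in
      if i = 1 \<and> j = 1 then fff F 2 2 u v / D
      else if i = 2 \<and> j = 2 then fff F 1 1 u v / D
      else - fff F i j u v / D)"

(* mean curvature H = tr A (unnormalized) *)
definition meancurv :: "(real \<Rightarrow> real \<Rightarrow> real \<times> real \<times> real) \<Rightarrow> (real \<Rightarrow> real \<Rightarrow> real \<times> real \<times> real)
     \<Rightarrow> real \<Rightarrow> real \<Rightarrow> real" where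
  "meancurv F N u v = (\<Sum>i\<in>{1,2}. \<Sum>j\<in>{1,2}. ginv F i j u v * sff F N i j u v)"

definition shapenorm2 :: "(real \<Rightarrow> real \<Rightarrow> real \<times> real \<times> real) \<Rightarrow> (real \<Rightarrow> real \<Rightarrow> real \<times> real \<times> real)
     \<Rightarrow> real \<Rightarrow> real \<Rightarrow> real" where
  "shapenorm2 F N u v = (\<Sum>i\<in>{1,2}. \<Sum>j\<in>{1,2}. \<Sum>k\<in>{1,2}. \<Sum>l\<in>{1,2}.
       ginv F i k u v * ginv F j l u v * sff F N i j u v * sff F N k l u v)"

definition tracelessnorm2 :: "(real \<Rightarrow> real \<Rightarrow> real \<times> real \<times> real) \<Rightarrow> (real \<Rightarrow> real \<Rightarrow> real \<times> real \<times> real)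
     \<Rightarrow> real \<Rightarrow> real \<Rightarrow> real" where
  "tracelessnorm2 F N u v = shapenorm2 F N u v - (meancurv F N u v)^2 / 2"

end

theory Submission
  imports Defs
begin

text \<open>
  At the points \<open>p\<^sub>n\<close> the phase \<open>\<phi> = H s + 3\<pi>/2\<close> satisfies \<open>sin \<phi> = -B\<close>, which is exactly
  where both \<open>x''\<close> and \<open>z''\<close> vanish.  There the meridian has an inflection point, so one
  principal curvature is \<open>0\<close> and the other is \<open>z'/x = H\<close>; hence \<open>|\<Phi>|\<^sup>2 = H\<^sup>2/2\<close> and the
  claimed inequality is equivalent to \<open>H \<langle>x,N\<rangle> < -1\<close>.  At these points
  \<open>\<langle>x,N\<rangle> = -B z - (1 - B\<^sup>2)/H\<close>, and \<open>z\<close> grows linearly because its integrand is at least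
  \<open>(1 - B)/(1 + B)\<close>, so the inequality holds for all large \<open>n\<close>.
\<close>

lemma has_vector_derivative_triple:
  assumes "(f has_real_derivative f') (at u)" "(g has_real_derivative g') (at u)"
    and "(h has_real_derivative h') (at u)"
  shows "((\<lambda>t. (f t, g t, h t)) has_vector_derivative (f', g', h')) (at u)"
  using assms
  by (auto intro!: has_vector_derivative_Pair simp: has_real_derivative_iff_has_vector_derivative)

lemma curvatures_orthogonal_coordinates:
  assumes "fff F 1 2 u v = 0" "fff F 2 1 u v = 0" "sff F N 1 2 u v = 0" "sff F N 2 1 u v = 0"
    and "fff F 1 1 u v \<noteq> 0" "fff F 2 2 u v \<noteq> 0"
  defines "k1 \<equiv> sff F N 1 1 u v / fff F 1 1 u v" and "k2 \<equiv> sff F N 2 2 u v / fff F 2 2 u v"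
  shows "meancurv F N u v = k1 + k2" and "shapenorm2 F N u v = k1^2 + k2^2"
    and "tracelessnorm2 F N u v = (k1 - k2)^2 / 2"
proof -
  have ginv: "ginv F 1 1 u v = 1 / fff F 1 1 u v" "ginv F 2 2 u v = 1 / fff F 2 2 u v"
    "ginv F 1 2 u v = 0" "ginv F 2 1 u v = 0"
    using assms(1,2,5,6) by (auto simp: ginv_def Let_def)
  show mc: "meancurv F N u v = k1 + k2"
    using assms(3,4) ginv by (simp add: meancurv_def k1_def k2_def One_nat_def)
  show sn: "shapenorm2 F N u v = k1^2 + k2^2"
    using assms(3,4) ginv
    by (simp add: shapenorm2_def k1_def k2_def power2_eq_square One_nat_def)
  show "tracelessnorm2 F N u v = (k1 - k2)^2 / 2"
    by (simp add: tracelessnorm2_def mc sn power2_eq_square field_simps)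
qed

lemma cos_cos_add_sin_sin: "cos \<theta> * (cos \<theta> * a) + sin \<theta> * (sin \<theta> * a) = (a :: real)"
proof -
  have "cos \<theta> * (cos \<theta> * a) + sin \<theta> * (sin \<theta> * a) = a * ((sin \<theta>)\<^sup>2 + (cos \<theta>)\<^sup>2)"
    by algebra
  then show ?thesis
    by simp
qed

lemma revX_inner_revN: "revX x z s \<theta> \<bullet> revN x z s \<theta> = z s * deriv x s - x s * deriv z s"
  by (simp add: revX_def revN_def algebra_simps cos_cos_add_sin_sin)

locale revolution_profile =
  fixes x z :: "real \<Rightarrow> real" and S :: "real set"
  assumes open_domain: "open S"
    and x_deriv: "s \<in> S \<Longrightarrow> (x has_real_derivative deriv x s) (at s)"
    and z_deriv: "s \<in> S \<Longrightarrow> (z has_real_derivative deriv z s) (at s)"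
    and x_deriv2: "s \<in> S \<Longrightarrow> (deriv x has_real_derivative deriv (deriv x) s) (at s)"
    and z_deriv2: "s \<in> S \<Longrightarrow> (deriv z has_real_derivative deriv (deriv z) s) (at s)"
begin

lemma pd_revX_1:
  "s \<in> S \<Longrightarrow> pd (revX x z) 1 s \<theta> = (deriv x s * cos \<theta>, deriv x s * sin \<theta>, deriv z s)"
  unfolding pd_def revX_def
  by (simp, intro vector_derivative_at has_vector_derivative_triple)
    (auto intro!: derivative_eq_intros x_deriv z_deriv)

lemma pd_revX_2: "pd (revX x z) 2 s \<theta> = (- x s * sin \<theta>, x s * cos \<theta>, 0)"
  unfolding pd_def revX_def
  by (simp, intro vector_derivative_at has_vector_derivative_triple)
    (auto intro!: derivative_eq_intros)

lemma pd_pd_revX_11: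
  assumes "s \<in> S"
  shows "pd (pd (revX x z) 1) 1 s \<theta>
     = (deriv (deriv x) s * cos \<theta>, deriv (deriv x) s * sin \<theta>, deriv (deriv z) s)"
proof -
  have "((\<lambda>t. (deriv x t * cos \<theta>, deriv x t * sin \<theta>, deriv z t)) has_vector_derivative
      (deriv (deriv x) s * cos \<theta>, deriv (deriv x) s * sin \<theta>, deriv (deriv z) s)) (at s)"
    using assms
    by (intro has_vector_derivative_triple) (auto intro!: derivative_eq_intros x_deriv2 z_deriv2)
  then have "((\<lambda>t. pd (revX x z) 1 t \<theta>) has_vector_derivative
      (deriv (deriv x) s * cos \<theta>, deriv (deriv x) s * sin \<theta>, deriv (deriv z) s)) (at s)"
    by (rule has_vector_derivative_transform_within_open[OF _ open_domain assms])
      (simp add: pd_revX_1[unfolded One_nat_def])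
  then show ?thesis
    unfolding pd_def[of "pd (revX x z) 1"] by (simp add: vector_derivative_at)
qed

lemma pd_pd_revX_12:
  assumes "s \<in> S"
  shows "pd (pd (revX x z) 1) 2 s \<theta> = (- deriv x s * sin \<theta>, deriv x s * cos \<theta>, 0)"
proof -
  have "pd (revX x z) 1 s = (\<lambda>\<phi>. (deriv x s * cos \<phi>, deriv x s * sin \<phi>, deriv z s))"
    using assms by (simp add: pd_revX_1[unfolded One_nat_def] fun_eq_iff)
  then show ?thesis
    unfolding pd_def[of "pd (revX x z) 1"]
    by (simp, intro vector_derivative_at has_vector_derivative_triple)
      (auto intro!: derivative_eq_intros)
qed

lemma pd_pd_revX_21:
  "s \<in> S \<Longrightarrow> pd (pd (revX x z) 2) 1 s \<theta> = (- deriv x s * sin \<theta>, deriv x s * cos \<theta>, 0)"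
  unfolding pd_def[of "pd (revX x z) 2"] pd_revX_2
  by (simp, intro vector_derivative_at has_vector_derivative_triple)
    (auto intro!: derivative_eq_intros x_deriv)

lemma pd_pd_revX_22: "pd (pd (revX x z) 2) 2 s \<theta> = (- x s * cos \<theta>, - x s * sin \<theta>, 0)"
proof -
  have "pd (revX x z) 2 s = (\<lambda>\<phi>. (- x s * sin \<phi>, x s * cos \<phi>, 0))"
    by (simp add: pd_revX_2 fun_eq_iff)
  then show ?thesis
    unfolding pd_def[of "pd (revX x z) 2"]
    by (simp, intro vector_derivative_at has_vector_derivative_triple)
      (auto intro!: derivative_eq_intros)
qed

lemma tracelessnorm2_revX:
  assumes "s \<in> S" "x s \<noteq> 0" "(deriv x s)\<^sup>2 + (deriv z s)\<^sup>2 \<noteq> 0"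
  shows "tracelessnorm2 (revX x z) (revN x z) s \<theta>
    = ((deriv x s * deriv (deriv z) s - deriv (deriv x) s * deriv z s)
          / ((deriv x s)\<^sup>2 + (deriv z s)\<^sup>2) - deriv z s / x s)\<^sup>2 / 2"
proof -
  have g: "fff (revX x z) 1 1 s \<theta> = (deriv x s)\<^sup>2 + (deriv z s)\<^sup>2"
    "fff (revX x z) 1 2 s \<theta> = 0" "fff (revX x z) 2 1 s \<theta> = 0"
    "fff (revX x z) 2 2 s \<theta> = (x s)\<^sup>2"
    using assms(1)
    by (simp_all add: fff_def pd_revX_1 pd_revX_2 algebra_simps power2_eq_square
        cos_cos_add_sin_sin del: One_nat_def)
  have b: "sff (revX x z) (revN x z) 1 1 s \<theta>
      = deriv x s * deriv (deriv z) s - deriv (deriv x) s * deriv z s"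
    "sff (revX x z) (revN x z) 1 2 s \<theta> = 0" "sff (revX x z) (revN x z) 2 1 s \<theta> = 0"
    "sff (revX x z) (revN x z) 2 2 s \<theta> = x s * deriv z s"
    using assms(1)
    by (simp_all add: sff_def revN_def pd_pd_revX_11 pd_pd_revX_12 pd_pd_revX_21 pd_pd_revX_22
        algebra_simps cos_cos_add_sin_sin del: One_nat_def)
  have "tracelessnorm2 (revX x z) (revN x z) s \<theta>
      = (sff (revX x z) (revN x z) 1 1 s \<theta> / fff (revX x z) 1 1 s \<theta>
         - sff (revX x z) (revN x z) 2 2 s \<theta> / fff (revX x z) 2 2 s \<theta>)\<^sup>2 / 2"
    using assms(2,3) by (intro curvatures_orthogonal_coordinates(3)) (simp_all add: g b del: One_nat_def)
  moreover have "x s * deriv z s / (x s)\<^sup>2 = deriv z s / x s"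
    using assms(2) by (simp add: power2_eq_square)
  ultimately show ?thesis
    unfolding g b by simp
qed

end

lemma unduloid_radicand_pos:
  fixes B w :: real
  assumes "\<bar>B\<bar> < 1"
  shows "0 < 1 + B\<^sup>2 + 2 * B * sin w"
proof -
  have "\<bar>B * sin w\<bar> \<le> \<bar>B\<bar>"
    by (simp add: abs_mult mult_left_le abs_sin_le_one)
  moreover have "0 < (1 - \<bar>B\<bar>)\<^sup>2"
    using assms by simp
  ultimately show ?thesis
    by (simp add: power2_eq_square algebra_simps)
qed

definition undx' :: "real \<Rightarrow> real \<Rightarrow> real \<Rightarrow> real" where
  "undx' B H s = B * cos (H * s + 3 * pi / 2) / sqrt (1 + B\<^sup>2 + 2 * B * sin (H * s + 3 * pi / 2))"

definition undz' :: "real \<Rightarrow> real \<Rightarrow> real \<Rightarrow> real" where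
  "undz' B H s = (1 + B * sin (H * s + 3 * pi / 2)) / sqrt (1 + B\<^sup>2 + 2 * B * sin (H * s + 3 * pi / 2))"

lemma undx_has_derivative:
  assumes "\<bar>B\<bar> < 1" "H \<noteq> 0"
  shows "(undx B H has_real_derivative undx' B H s) (at s)"
  unfolding undx_def[abs_def] undx'_def
  using unduloid_radicand_pos[OF assms(1), of "H * s + 3 * pi / 2"] assms(2)
  by (auto intro!: derivative_eq_intros simp: field_simps)

lemma undx'_has_derivative:
  fixes B H s :: real
  assumes "\<bar>B\<bar> < 1"
  defines "\<phi> \<equiv> H * s + 3 * pi / 2"
  defines "D \<equiv> 1 + B\<^sup>2 + 2 * B * sin \<phi>"
  shows "(undx' B H has_real_derivative
      - H * B * (sin \<phi> + B) * (1 + B * sin \<phi>) / (D * sqrt D)) (at s)"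
proof -
  have D: "0 < D"
    unfolding D_def by (rule unduloid_radicand_pos[OF assms(1)])
  have "(undx' B H has_real_derivative
      (B * (- sin \<phi> * H) * sqrt D - B * cos \<phi> * (2 * B * cos \<phi> * H / (2 * sqrt D))) / D) (at s)"
    unfolding undx'_def[abs_def] \<phi>_def D_def
    using unduloid_radicand_pos[OF assms(1), of "H * s + 3 * pi / 2"]
    by (auto intro!: derivative_eq_intros simp: field_simps)
  also have "(B * (- sin \<phi> * H) * sqrt D - B * cos \<phi> * (2 * B * cos \<phi> * H / (2 * sqrt D))) / D
      = - H * B * (sin \<phi> * D + B * (cos \<phi>)\<^sup>2) / (D * sqrt D)"
    using D by (simp add: field_simps power2_eq_square)
  also have "sin \<phi> * D + B * (cos \<phi>)\<^sup>2 = (sin \<phi> + B) * (1 + B * sin \<phi>)"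
    using sin_cos_squared_add[of \<phi>] unfolding D_def by algebra
  finally show ?thesis
    by (simp add: mult.assoc)
qed

lemma undz'_has_derivative:
  fixes B H s :: real
  assumes "\<bar>B\<bar> < 1"
  defines "\<phi> \<equiv> H * s + 3 * pi / 2"
  defines "D \<equiv> 1 + B\<^sup>2 + 2 * B * sin \<phi>"
  shows "(undz' B H has_real_derivative H * B\<^sup>2 * cos \<phi> * (sin \<phi> + B) / (D * sqrt D)) (at s)"
proof -
  have D: "0 < D"
    unfolding D_def by (rule unduloid_radicand_pos[OF assms(1)])
  have "(undz' B H has_real_derivative
      (B * cos \<phi> * H * sqrt D - (1 + B * sin \<phi>) * (2 * B * cos \<phi> * H / (2 * sqrt D))) / D) (at s)"
    unfolding undz'_def[abs_def] \<phi>_def D_def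
    using unduloid_radicand_pos[OF assms(1), of "H * s + 3 * pi / 2"]
    by (auto intro!: derivative_eq_intros simp: field_simps)
  also have "(B * cos \<phi> * H * sqrt D - (1 + B * sin \<phi>) * (2 * B * cos \<phi> * H / (2 * sqrt D))) / D
      = H * B * cos \<phi> * (D - (1 + B * sin \<phi>)) / (D * sqrt D)"
    using D by (simp add: field_simps power2_eq_square)
  also have "D - (1 + B * sin \<phi>) = B * (sin \<phi> + B)"
    by (simp add: D_def algebra_simps power2_eq_square)
  finally show ?thesis
    by (simp add: power2_eq_square mult.assoc mult.left_commute)
qed

text \<open>
  The oriented integral defining \<open>undz\<close> is an ordinary integral over \<open>[3\<pi>/(2H), s + 3\<pi>/(2H)]\<close>
  only for \<open>s \<ge> 0\<close>; differentiability is therefore established on \<open>s > 0\<close>, which contains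
  all the points \<open>t\<^sub>n\<close>.
\<close>

lemma undz_has_derivative:
  assumes "\<bar>B\<bar> < 1" "H > 0" "s > 0"
  shows "(undz B H has_real_derivative undz' B H s) (at s)"
proof -
  define a where "a = 3 * pi / (2 * H)"
  define f where "f = (\<lambda>t. (1 + B * sin (H * t)) / sqrt (1 + B\<^sup>2 + 2 * B * sin (H * t)))"
  have "a > 0"
    using assms(2) by (simp add: a_def)
  have f_cont: "continuous_on T f" for T
    using unduloid_radicand_pos[OF assms(1)]
    unfolding f_def by (auto intro!: continuous_intros simp: less_le)
  have "((\<lambda>y. integral {a..y} f) has_real_derivative f y) (at y)" if "a < y" for y
  proof -
    have "((\<lambda>y. integral {a..y} f) has_real_derivative f y) (at y within {a..y+1})"
      using that by (intro integral_has_real_derivative f_cont) auto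
    moreover have "at y within {a..y+1} = at y"
      by (rule at_within_interior) (use that in auto)
    ultimately show ?thesis
      by simp
  qed
  then have "((\<lambda>y. integral {a..y} f) has_real_derivative f (s + a)) (at (s + a))"
    using \<open>a > 0\<close> assms(3) by simp
  then have "((\<lambda>s. integral {a..s + a} f) has_real_derivative f (s + a)) (at s)"
    by (simp only: DERIV_shift)
  moreover have "f (s + a) = undz' B H s"
    using assms(2) by (simp add: f_def undz'_def a_def distrib_left)
  ultimately have "((\<lambda>s. integral {a..s + a} f) has_real_derivative undz' B H s) (at s)"
    by simp
  moreover have "integral {a..u + a} f = undz B H u" if "u \<in> {0<..}" for u
    using assms(2) that unfolding undz_def oint_def a_def f_def by simp
  ultimately show ?thesis
    using assms(3) by (blast intro: has_field_derivative_transform_within_open[OF _ open_greaterThan])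
qed

lemma deriv_undx:
  assumes "\<bar>B\<bar> < 1" "H \<noteq> 0"
  shows "deriv (undx B H) = undx' B H"
  using undx_has_derivative[OF assms] by (simp add: DERIV_imp_deriv fun_eq_iff)

lemma deriv_undz:
  assumes "\<bar>B\<bar> < 1" "H > 0" "s > 0"
  shows "deriv (undz B H) s = undz' B H s"
  using undz_has_derivative[OF assms] by (rule DERIV_imp_deriv)

lemma deriv_undz_has_derivative:
  assumes "\<bar>B\<bar> < 1" "H > 0" "s > 0"
  defines "\<phi> \<equiv> H * s + 3 * pi / 2"
  defines "D \<equiv> 1 + B\<^sup>2 + 2 * B * sin \<phi>"
  shows "(deriv (undz B H) has_real_derivative H * B\<^sup>2 * cos \<phi> * (sin \<phi> + B) / (D * sqrt D)) (at s)"
proof (rule has_field_derivative_transform_within_open[OF _ open_greaterThan])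
  show "(undz' B H has_real_derivative H * B\<^sup>2 * cos \<phi> * (sin \<phi> + B) / (D * sqrt D)) (at s)"
    unfolding \<phi>_def D_def by (rule undz'_has_derivative[OF assms(1)])
qed (use assms deriv_undz in auto)

lemma revolution_profile_unduloid:
  assumes "\<bar>B\<bar> < 1" "H > 0"
  shows "revolution_profile (undx B H) (undz B H) {0<..}"
proof
  have has_deriv: "(f has_real_derivative deriv f s) (at s)"
    if "(f has_real_derivative D) (at s)" for f :: "real \<Rightarrow> real" and D s
    using that DERIV_imp_deriv by metis
  fix s :: real
  assume "s \<in> {0<..}"
  then show "(undx B H has_real_derivative deriv (undx B H) s) (at s)"
    and "(undz B H has_real_derivative deriv (undz B H) s) (at s)"
    and "(deriv (undx B H) has_real_derivative deriv (deriv (undx B H)) s) (at s)"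
    and "(deriv (undz B H) has_real_derivative deriv (deriv (undz B H)) s) (at s)"
    using assms undx_has_derivative undz_has_derivative
      undx'_has_derivative[THEN has_deriv] deriv_undz_has_derivative[THEN has_deriv]
    by (auto simp: deriv_undx deriv_undz)
qed simp

lemma undx'_squared_add_undz'_squared:
  assumes "\<bar>B\<bar> < 1"
  shows "(undx' B H s)\<^sup>2 + (undz' B H s)\<^sup>2 = 1"
proof -
  define \<phi> where "\<phi> = H * s + 3 * pi / 2"
  have D: "0 < 1 + B\<^sup>2 + 2 * B * sin \<phi>"
    by (rule unduloid_radicand_pos[OF assms])
  have "(B * cos \<phi>)\<^sup>2 + (1 + B * sin \<phi>)\<^sup>2 = 1 + B\<^sup>2 + 2 * B * sin \<phi>"
    using sin_cos_squared_add[of \<phi>] by algebra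
  then show ?thesis
    using D by (simp add: undx'_def undz'_def \<phi>_def[symmetric] power_divide add_divide_distrib[symmetric])
qed

lemma unduloid_inflection_point:
  assumes "\<bar>B\<bar> < 1" "H > 0" "p > 0" "sin (H * p + 3 * pi / 2) = - B"
  shows "undx B H p = sqrt (1 - B\<^sup>2) / H"
    and "deriv (undz B H) p = sqrt (1 - B\<^sup>2)"
    and "deriv (undx B H) p = B * cos (H * p + 3 * pi / 2) / sqrt (1 - B\<^sup>2)"
    and "deriv (deriv (undx B H)) p = 0"
    and "deriv (deriv (undz B H)) p = 0"
proof -
  have D: "1 + B\<^sup>2 + 2 * B * sin (H * p + 3 * pi / 2) = 1 - B\<^sup>2"
    using assms(4) by (simp add: power2_eq_square)
  have "0 < 1 - B\<^sup>2"
    using assms(1) by (simp add: abs_square_less_1)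
  then have c: "(1 - B\<^sup>2) / sqrt (1 - B\<^sup>2) = sqrt (1 - B\<^sup>2)"
    by (simp add: real_div_sqrt)
  show "undx B H p = sqrt (1 - B\<^sup>2) / H"
    using D by (simp add: undx_def)
  show "deriv (undz B H) p = sqrt (1 - B\<^sup>2)"
    using assms D c by (simp add: deriv_undz undz'_def power2_eq_square)
  show "deriv (undx B H) p = B * cos (H * p + 3 * pi / 2) / sqrt (1 - B\<^sup>2)"
    using assms D by (simp add: deriv_undx undx'_def)
  show "deriv (deriv (undx B H)) p = 0"
    using DERIV_imp_deriv[OF undx'_has_derivative[OF assms(1), of H p]] assms
    by (simp add: deriv_undx)
  show "deriv (deriv (undz B H)) p = 0"
    using DERIV_imp_deriv[OF deriv_undz_has_derivative[OF assms(1-3)]] assms(4) by simp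
qed

lemma tracelessnorm2_unduloid_inflection:
  assumes "\<bar>B\<bar> < 1" "H > 0" "p > 0" "sin (H * p + 3 * pi / 2) = - B"
  shows "tracelessnorm2 (revX (undx B H) (undz B H)) (revN (undx B H) (undz B H)) p \<theta> = H\<^sup>2 / 2"
proof -
  interpret revolution_profile "undx B H" "undz B H" "{0<..}"
    by (rule revolution_profile_unduloid[OF assms(1,2)])
  have unit: "(deriv (undx B H) p)\<^sup>2 + (deriv (undz B H) p)\<^sup>2 = 1"
    using undx'_squared_add_undz'_squared[OF assms(1)] assms by (simp add: deriv_undx deriv_undz)
  have "0 < sqrt (1 - B\<^sup>2)"
    using assms(1) by (simp add: abs_square_less_1)
  then show ?thesis
    using tracelessnorm2_revX[of p \<theta>] unit unduloid_inflection_point[OF assms] assms(2,3)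
    by (simp add: power_divide)
qed

lemma revX_inner_revN_unduloid_inflection:
  assumes "\<bar>B\<bar> < 1" "H > 0" "p > 0" "sin (H * p + 3 * pi / 2) = - B"
    and "cos (H * p + 3 * pi / 2) = - sqrt (1 - B\<^sup>2)"
  shows "revX (undx B H) (undz B H) p \<theta> \<bullet> revN (undx B H) (undz B H) p \<theta>
    = - B * undz B H p - (1 - B\<^sup>2) / H"
proof -
  have "0 < 1 - B\<^sup>2"
    using assms(1) by (simp add: abs_square_less_1)
  then show ?thesis
    using unduloid_inflection_point[OF assms(1-4)] assms(5)
    by (simp add: revX_inner_revN)
qed

lemma unduloid_phase_sin_cos:
  fixes B H :: real and n :: nat
  assumes "\<bar>B\<bar> \<le> 1" "H \<noteq> 0"
  defines "t \<equiv> - (1 / H) * arcsin (- B) + (4 * real n - 1) * pi / (2 * H)"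
  shows "sin (H * t + 3 * pi / 2) = - B" and "cos (H * t + 3 * pi / 2) = - sqrt (1 - B\<^sup>2)"
proof -
  have "arcsin (- B) = - arcsin B"
    using assms(1) by (intro arcsin_minus) auto
  then have "H * t + 3 * pi / 2 = (arcsin B + pi) + 2 * real n * pi"
    using assms(2) by (simp add: t_def field_simps)
  then show "sin (H * t + 3 * pi / 2) = - B" and "cos (H * t + 3 * pi / 2) = - sqrt (1 - B\<^sup>2)"
    using assms(1) by (simp_all add: sin_add cos_add cos_arcsin)
qed

lemma undz_lower_bound:
  assumes "0 \<le> B" "B < 1" "H > 0" "s \<ge> 0"
  shows "s * (1 - B) / (1 + B) \<le> undz B H s"
proof -
  define a where "a = 3 * pi / (2 * H)"
  define f where "f = (\<lambda>t. (1 + B * sin (H * t)) / sqrt (1 + B\<^sup>2 + 2 * B * sin (H * t)))"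
  have f_lower: "(1 - B) / (1 + B) \<le> f t" for t
  proof -
    have "\<bar>B * sin (H * t)\<bar> \<le> B"
      using assms(1) by (simp add: abs_mult mult_left_le abs_sin_le_one)
    then have "1 - B \<le> 1 + B * sin (H * t)"
      and "1 + B\<^sup>2 + 2 * B * sin (H * t) \<le> (1 + B)\<^sup>2"
      by (auto simp: power2_eq_square algebra_simps abs_le_iff)
    moreover from this(2) have "sqrt (1 + B\<^sup>2 + 2 * B * sin (H * t)) \<le> 1 + B"
      using real_sqrt_le_mono assms(1) by fastforce
    moreover have "0 < 1 + B\<^sup>2 + 2 * B * sin (H * t)"
      using assms(1,2) by (intro unduloid_radicand_pos) simp
    ultimately show ?thesis
      unfolding f_def using assms(1,2) by (intro frac_le) auto
  qed
  have "continuous_on {a..s + a} f"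
    using unduloid_radicand_pos[of B] assms(1,2)
    unfolding f_def by (auto intro!: continuous_intros simp: less_le)
  then have "integral {a..s + a} (\<lambda>_. (1 - B) / (1 + B)) \<le> integral {a..s + a} f"
    using f_lower by (intro integral_le integrable_continuous_interval) auto
  moreover have "undz B H s = integral {a..s + a} f"
    using assms(3,4) unfolding undz_def oint_def a_def f_def by simp
  ultimately show ?thesis
    using assms(4) by simp
qed

lemma unduloid_phase_ge:
  fixes B H :: real and n :: nat
  assumes "0 \<le> B" "B \<le> 1" "H > 0" "n \<ge> 1"
  shows "real n \<le> H * (- (1 / H) * arcsin (- B) + (4 * real n - 1) * pi / (2 * H))"
proof -
  have "1 \<le> real n"
    using assms(4) by simp
  then have "real n \<le> (4 * real n - 1) * 3 / 2"
    by simp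
  also have "\<dots> \<le> (4 * real n - 1) * pi / 2"
    using \<open>1 \<le> real n\<close> pi_gt3 by (intro divide_right_mono mult_left_mono) auto
  also have "\<dots> \<le> - arcsin (- B) + (4 * real n - 1) * pi / 2"
    using assms(1,2) arcsin_le_arcsin[of "- B" 0] by simp
  also have "\<dots> = H * (- (1 / H) * arcsin (- B) + (4 * real n - 1) * pi / (2 * H))"
    using assms(3) by (simp add: field_simps)
  finally show ?thesis .
qed

lemma unduloid_height_grows:
  fixes B H :: real and n :: nat
  assumes "0 < B" "B < 1" "H > 0" "(1 + B) / (1 - B) < real n"
  defines "t \<equiv> - (1 / H) * arcsin (- B) + (4 * real n - 1) * pi / (2 * H)"
  shows "0 < t" and "1 < H * undz B H t"
proof -
  have "1 < (1 + B) / (1 - B)"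
    using assms(1,2) by simp
  then have "1 \<le> n"
    using assms(4) by linarith
  then have Ht: "real n \<le> H * t"
    unfolding t_def using unduloid_phase_ge assms(1-3) by simp
  with \<open>1 \<le> n\<close> have "0 < H * t"
    by linarith
  then show "0 < t"
    using assms(3) by (simp add: zero_less_mult_iff)
  have "1 < real n * ((1 - B) / (1 + B))"
    using assms(1,2,4) by (simp add: field_simps)
  also have "\<dots> \<le> H * t * ((1 - B) / (1 + B))"
    using Ht assms(1,2) by (intro mult_right_mono) auto
  also have "\<dots> = H * (t * (1 - B) / (1 + B))"
    by simp
  also have "\<dots> \<le> H * undz B H t"
    using undz_lower_bound[OF _ assms(2,3), of t] assms(1,3) \<open>0 < t\<close>
    by (intro mult_left_mono) auto
  finally show "1 < H * undz B H t" .
qed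

theorem lemma3p7:
  fixes B H :: real
  assumes "0 < B" "B < 1" "H > 0"
  defines "X \<equiv> revX (undx B H) (undz B H)"
      and "N \<equiv> revN (undx B H) (undz B H)"
      and "t \<equiv> (\<lambda>n::nat. - (1 / H) * arcsin (- B) + (4 * real n - 1) * pi / (2 * H))"
  shows "\<exists>n0::nat. \<forall>n\<ge>n0.
           tracelessnorm2 X N (t n) 0 * (X (t n) 0 \<bullet> N (t n) 0)^2
             > (1/2) * (2 + H * (X (t n) 0 \<bullet> N (t n) 0))^2"
proof -
  have B: "\<bar>B\<bar> < 1"
    using assms(1,2) by simp
  obtain n0 :: nat where n0: "(1 + B) / (1 - B) < real n0"
    using reals_Archimedean2 by blast
  show ?thesis
  proof (intro exI allI impI)
    fix n
    assume "n0 \<le> n"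
    with n0 have n: "(1 + B) / (1 - B) < real n"
      by linarith
    have t_n: "- (1 / H) * arcsin (- B) + (4 * real n - 1) * pi / (2 * H) = t n"
      by (simp add: t_def)
    note height = unduloid_height_grows[OF assms(1-3) n, unfolded t_n]
    have phase: "sin (H * t n + 3 * pi / 2) = - B" "cos (H * t n + 3 * pi / 2) = - sqrt (1 - B\<^sup>2)"
      using unduloid_phase_sin_cos[of B H n] B assms(3) unfolding t_n by auto
    have "B * B < B * (H * undz B H (t n))"
      using height(2) assms(1,2) by (intro mult_strict_left_mono) auto
    moreover have "X (t n) 0 \<bullet> N (t n) 0 = - B * undz B H (t n) - (1 - B\<^sup>2) / H"
      unfolding X_def N_def by (rule revX_inner_revN_unduloid_inflection[OF B assms(3) height(1) phase])
    ultimately have "H * (X (t n) 0 \<bullet> N (t n) 0) < - 1"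
      using assms(3) by (simp add: field_simps power2_eq_square)
    moreover have "tracelessnorm2 X N (t n) 0 = H\<^sup>2 / 2"
      unfolding X_def N_def by (rule tracelessnorm2_unduloid_inflection[OF B assms(3) height(1) phase(1)])
    moreover have "(1/2) * (2 + H * v)\<^sup>2 = H\<^sup>2 / 2 * v\<^sup>2 + 2 * (1 + H * v)" for v :: real
      by (simp add: power2_eq_square algebra_simps)
    ultimately show "tracelessnorm2 X N (t n) 0 * (X (t n) 0 \<bullet> N (t n) 0)^2
        > (1/2) * (2 + H * (X (t n) 0 \<bullet> N (t n) 0))^2"
      by (simp only:) simp
  qed
qed

end
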